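(* Let $\mathcal{G}$ be a groupoid (not necessarily finite). Define $\widetilde{S}_{*1}\colon\mathrm{Aut}(\mathcal{G})\to h\mathrm{aut}(\widetilde{S}(\mathcal{G}))$ and $\widetilde{S}_{*2}\colon\mathrm{Aut}(\mathcal{G})\to h\mathrm{Aut}(\widetilde{S}(\mathcal{G}))$ by $u\mapsto[\widetilde{S}(u)]$. Then $\eta_{\widetilde{S}(\mathcal{G})}\circ\widetilde{S}_{*2}=\widetilde{S}_{*1}$, and $\widetilde{S}_{*1}$ is a monomorphism of groups. Moreover, if $\mathcal{G}$ is finite, then $\widetilde{S}_{*2}$ is an isomorphism.
   Context: For a groupoid $\mathcal{H}$, the quasi-schemoid $\widetilde{S}(\mathcal{H})=(\widetilde{\mathcal{H}},S)$ has $ob(\widetilde{\mathcal{H}})=mor(\mathcal{H})$, $\mathrm{Hom}_{\widetilde{\mathcal{H}}}(g,h)=\{(h,g)\}$ if $t(h)=t(g)$ and empty otherwise (composition $(k,h)\circ(h,g)=(k,g)$), and partition $S=\{\mathcal{G}_f\}_{f\in mor(\mathcal{H})}$ with $\mathcal{G}_f=\{(k,l)\mid k^{-1}l=f\}$. For a functor $u\colon\mathcal{G}\to\mathcal{H}$ of groupoids, $\widetilde{S}(u)$ is the morphism of quasi-schemoids sending an object $i$ to $u(i)$ and a morphism $(h,g)$ to $(u(h),u(g))$. A quasi-schemoid is a small category with a partition of its morphisms such that for blocks $\sigma,\tau,\mu$ and $f,g\in\mu$ the number of composable pairs $(a,b)\in\sigma\times\tau$ with $a\circ b=f$ equals that with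 $a\circ b=g$; a morphism of quasi-schemoids is a functor sending each block of the source partition into some block of the target partition. Product: $(\mathcal{C},S)\times(\mathcal{E},S')=(\mathcal{C}\times\mathcal{E},\{\sigma\times\tau\})$. $[1]$ has objects $0,1$ and one non-identity morphism $0\to1$; $I=([1],\{\{f\}\}_f)$. A homotopy $H\colon F\Rightarrow G$ is a morphism $H\colon(\mathcal{C},S)\times I\to(\mathcal{D},S')$ with $H\circ\varepsilon_0=F$, $H\circ\varepsilon_1=G$ ($\varepsilon_i(a)=(a,i)$, $\varepsilon_i(f)=(f,1_i)$). $F\sim G$ means there is a homotopy $F\Rightarrow G$ or $G\Rightarrow F$; $F\simeq G$ means a finite chain $F=F_0\sim\cdots\sim F_n=G$ ($\simeq$ is an equivalence relation compatible with composition). $h\mathrm{aut}(A)$ is the group of $\simeq$-classes of self-homotopy equivalences of $A$ (morphisms $F\colon A\to A$ with some $G$ satisfying $FG\simeq1$, $GF\simeq1$) under composition; $h\mathrm{Aut}(A)$ is the group of $\simeq$-classes of automorphisms (invertible morphisms) of the quasi-schemoid $A$; $\eta_A\colon h\mathrm{Aut}(A)\to h\mathrm{aut}(A)$ is the natural map induced by inclusion. $\mathrm{Aut}(\mathcal{G})$ is the group of autofunctors (invertible functors) of $\mathcal{G}$. *)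

theory Defs
  imports "HOL-Algebra.Group" "HOL-Library.Equipollence"
begin

record ('o, 'm) cat =
  cobj :: "'o set"
  cmor :: "'m set"
  cdom :: "'m \<Rightarrow> 'o"
  ccod :: "'m \<Rightarrow> 'o"
  cid  :: "'o \<Rightarrow> 'm"
  ccomp :: "'m \<Rightarrow> 'm \<Rightarrow> 'm"   (* ccomp C g f = g \<circ> f, defined when ccod f = cdom g *)

definition is_cat :: "('o, 'm, 'z) cat_scheme \<Rightarrow> bool" where
  "is_cat C \<longleftrightarrow>
     (\<forall>f\<in>cmor C. cdom C f \<in> cobj C \<and> ccod C f \<in> cobj C) \<and>
     (\<forall>a\<in>cobj C. cid C a \<in> cmor C \<and> cdom C (cid C a) = a \<and> ccod C (cid C a) = a) \<and>
     (\<forall>f\<in>cmor C. \<forall>g\<in>cmor C. ccod C f = cdom C g \<longrightarrow>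
        ccomp C g f \<in> cmor C \<and> cdom C (ccomp C g f) = cdom C f \<and> ccod C (ccomp C g f) = ccod C g) \<and>
     (\<forall>f\<in>cmor C. \<forall>g\<in>cmor C. \<forall>h\<in>cmor C. ccod C f = cdom C g \<longrightarrow> ccod C g = cdom C h \<longrightarrow>
        ccomp C h (ccomp C g f) = ccomp C (ccomp C h g) f) \<and>
     (\<forall>f\<in>cmor C. ccomp C f (cid C (cdom C f)) = f \<and> ccomp C (cid C (ccod C f)) f = f)"

definition is_groupoid :: "('o, 'm, 'z) cat_scheme \<Rightarrow> bool" where
  "is_groupoid C \<longleftrightarrow> is_cat C \<and>
     (\<forall>f\<in>cmor C. \<exists>g\<in>cmor C. cdom C g = ccod C f \<and> ccod C g = cdom C f \<and>
        ccomp C g f = cid C (cdom C f) \<and> ccomp C f g = cid C (ccod C f))"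

definition ginv :: "('o, 'm, 'z) cat_scheme \<Rightarrow> 'm \<Rightarrow> 'm" where
  "ginv C f = (SOME g. g \<in> cmor C \<and> cdom C g = ccod C f \<and> ccod C g = cdom C f \<and>
        ccomp C g f = cid C (cdom C f) \<and> ccomp C f g = cid C (ccod C f))"

text \<open>Functors are pairs (object map, morphism map), extensional outside the carriers,
  so that equal functors are equal as HOL values.\<close>

type_synonym ('a, 'b, 'c, 'd) fctr = "('a \<Rightarrow> 'c) \<times> ('b \<Rightarrow> 'd)"

definition is_functor :: "('a, 'b) cat \<Rightarrow> ('c, 'd) cat \<Rightarrow> ('a, 'b, 'c, 'd) fctr \<Rightarrow> bool" where
  "is_functor C D F \<longleftrightarrow>
     (\<forall>a\<in>cobj C. fst F a \<in> cobj D) \<and>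
     (\<forall>f\<in>cmor C. snd F f \<in> cmor D \<and> cdom D (snd F f) = fst F (cdom C f) \<and>
                  ccod D (snd F f) = fst F (ccod C f)) \<and>
     (\<forall>a\<in>cobj C. snd F (cid C a) = cid D (fst F a)) \<and>
     (\<forall>f\<in>cmor C. \<forall>g\<in>cmor C. ccod C f = cdom C g \<longrightarrow>
        snd F (ccomp C g f) = ccomp D (snd F g) (snd F f)) \<and>
     fst F \<in> extensional (cobj C) \<and> snd F \<in> extensional (cmor C)"

definition fcomp :: "('a, 'b) cat \<Rightarrow> ('c, 'd, 'e, 'f) fctr \<Rightarrow> ('a, 'b, 'c, 'd) fctr \<Rightarrow> ('a, 'b, 'e, 'f) fctr" where
  "fcomp C F G = ((\<lambda>a\<in>cobj C. fst F (fst G a)), (\<lambda>f\<in>cmor C. snd F (snd G f)))"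

definition fid :: "('a, 'b) cat \<Rightarrow> ('a, 'b, 'a, 'b) fctr" where
  "fid C = ((\<lambda>a\<in>cobj C. a), (\<lambda>f\<in>cmor C. f))"

definition is_autofunctor :: "('a, 'b) cat \<Rightarrow> ('a, 'b, 'a, 'b) fctr \<Rightarrow> bool" where
  "is_autofunctor C F \<longleftrightarrow> is_functor C C F \<and>
     (\<exists>G. is_functor C C G \<and> fcomp C G F = fid C \<and> fcomp C F G = fid C)"

definition AutG :: "('a, 'b) cat \<Rightarrow> ('a, 'b, 'a, 'b) fctr monoid" where
  "AutG C = \<lparr>carrier = {F. is_autofunctor C F}, mult = fcomp C, one = fid C\<rparr>"

type_synonym ('a, 'b) qs = "('a, 'b) cat \<times> 'b set set"

definition is_qs :: "('a, 'b) qs \<Rightarrow> bool" where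
  "is_qs A \<longleftrightarrow> is_cat (fst A) \<and>
     (\<forall>\<sigma>\<in>snd A. \<sigma> \<noteq> {}) \<and> \<Union>(snd A) = cmor (fst A) \<and>
     (\<forall>\<sigma>\<in>snd A. \<forall>\<tau>\<in>snd A. \<sigma> \<noteq> \<tau> \<longrightarrow> \<sigma> \<inter> \<tau> = {}) \<and>
     (\<forall>\<sigma>\<in>snd A. \<forall>\<tau>\<in>snd A. \<forall>\<mu>\<in>snd A. \<forall>f\<in>\<mu>. \<forall>g\<in>\<mu>.
        {(a, b). a \<in> \<sigma> \<and> b \<in> \<tau> \<and> ccod (fst A) b = cdom (fst A) a \<and> ccomp (fst A) a b = f}
        \<approx> {(a, b). a \<in> \<sigma> \<and> b \<in> \<tau> \<and> ccod (fst A) b = cdom (fst A) a \<and> ccomp (fst A) a b = g})"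

definition qs_mor :: "('a, 'b) qs \<Rightarrow> ('c, 'd) qs \<Rightarrow> ('a, 'b, 'c, 'd) fctr \<Rightarrow> bool" where
  "qs_mor A B F \<longleftrightarrow> is_functor (fst A) (fst B) F \<and>
     (\<forall>\<sigma>\<in>snd A. \<exists>\<tau>\<in>snd B. snd F ` \<sigma> \<subseteq> \<tau>)"

definition cat1 :: "(nat, nat \<times> nat) cat" where
  "cat1 = \<lparr>cobj = {0, 1}, cmor = {(0, 0), (1, 1), (0, 1)},
           cdom = fst, ccod = snd, cid = (\<lambda>i. (i, i)),
           ccomp = (\<lambda>g f. (fst f, snd g))\<rparr>"

definition qsI :: "(nat, nat \<times> nat) qs" where
  "qsI = (cat1, {{f} | f. f \<in> cmor cat1})"

definition prod_cat :: "('a, 'b) cat \<Rightarrow> ('c, 'd) cat \<Rightarrow> ('a \<times> 'c, 'b \<times> 'd) cat" where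
  "prod_cat C E = \<lparr>cobj = cobj C \<times> cobj E, cmor = cmor C \<times> cmor E,
     cdom = (\<lambda>(f, g). (cdom C f, cdom E g)), ccod = (\<lambda>(f, g). (ccod C f, ccod E g)),
     cid = (\<lambda>(a, b). (cid C a, cid E b)),
     ccomp = (\<lambda>(f, g) (f', g'). (ccomp C f f', ccomp E g g'))\<rparr>"

definition prod_qs :: "('a, 'b) qs \<Rightarrow> ('c, 'd) qs \<Rightarrow> ('a \<times> 'c, 'b \<times> 'd) qs" where
  "prod_qs A B = (prod_cat (fst A) (fst B), {\<sigma> \<times> \<tau> | \<sigma> \<tau>. \<sigma> \<in> snd A \<and> \<tau> \<in> snd B})"

definition htpy :: "('a, 'b) qs \<Rightarrow> ('c, 'd) qs \<Rightarrow> ('a, 'b, 'c, 'd) fctr \<Rightarrow> ('a, 'b, 'c, 'd) fctr \<Rightarrow> bool" where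
  "htpy A B F G \<longleftrightarrow> qs_mor A B F \<and> qs_mor A B G \<and>
     (\<exists>H. qs_mor (prod_qs A qsI) B H \<and>
        (\<forall>a\<in>cobj (fst A). fst H (a, 0) = fst F a \<and> fst H (a, 1) = fst G a) \<and>
        (\<forall>f\<in>cmor (fst A). snd H (f, (0, 0)) = snd F f \<and> snd H (f, (1, 1)) = snd G f))"

definition htpy_sim :: "('a, 'b) qs \<Rightarrow> ('c, 'd) qs \<Rightarrow> (('a, 'b, 'c, 'd) fctr \<times> ('a, 'b, 'c, 'd) fctr) set" where
  "htpy_sim A B = {(F, G). htpy A B F G \<or> htpy A B G F}"

definition htpc :: "('a, 'b) qs \<Rightarrow> ('c, 'd) qs \<Rightarrow> ('a, 'b, 'c, 'd) fctr \<Rightarrow> ('a, 'b, 'c, 'd) fctr \<Rightarrow> bool" where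
  "htpc A B F G \<longleftrightarrow> qs_mor A B F \<and> qs_mor A B G \<and> (F, G) \<in> (htpy_sim A B)\<^sup>*"

definition hcls :: "('a, 'b) qs \<Rightarrow> ('a, 'b, 'a, 'b) fctr \<Rightarrow> ('a, 'b, 'a, 'b) fctr set" where
  "hcls A F = {G. htpc A A F G}"

definition self_heq :: "('a, 'b) qs \<Rightarrow> ('a, 'b, 'a, 'b) fctr \<Rightarrow> bool" where
  "self_heq A F \<longleftrightarrow> qs_mor A A F \<and>
     (\<exists>G. qs_mor A A G \<and> htpc A A (fcomp (fst A) F G) (fid (fst A)) \<and>
          htpc A A (fcomp (fst A) G F) (fid (fst A)))"

definition haut :: "('a, 'b) qs \<Rightarrow> ('a, 'b, 'a, 'b) fctr set monoid" where
  "haut A = \<lparr>carrier = {hcls A F | F. self_heq A F},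
     mult = (\<lambda>X Y. hcls A (fcomp (fst A) (SOME F. F \<in> X) (SOME G. G \<in> Y))),
     one = hcls A (fid (fst A))\<rparr>"

definition qs_aut :: "('a, 'b) qs \<Rightarrow> ('a, 'b, 'a, 'b) fctr \<Rightarrow> bool" where
  "qs_aut A F \<longleftrightarrow> qs_mor A A F \<and>
     (\<exists>G. qs_mor A A G \<and> fcomp (fst A) G F = fid (fst A) \<and> fcomp (fst A) F G = fid (fst A))"

definition acls :: "('a, 'b) qs \<Rightarrow> ('a, 'b, 'a, 'b) fctr \<Rightarrow> ('a, 'b, 'a, 'b) fctr set" where
  "acls A F = {G. qs_aut A G \<and> htpc A A F G}"

definition hAut :: "('a, 'b) qs \<Rightarrow> ('a, 'b, 'a, 'b) fctr set monoid" where
  "hAut A = \<lparr>carrier = {acls A F | F. qs_aut A F},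
     mult = (\<lambda>X Y. acls A (fcomp (fst A) (SOME F. F \<in> X) (SOME G. G \<in> Y))),
     one = acls A (fid (fst A))\<rparr>"

text \<open>\<eta>_A : hAut(A) \<rightarrow> haut(A), induced by inclusion.\<close>
definition eta :: "('a, 'b) qs \<Rightarrow> ('a, 'b, 'a, 'b) fctr set \<Rightarrow> ('a, 'b, 'a, 'b) fctr set" where
  "eta A X = hcls A (SOME F. F \<in> X)"

definition Stilde_cat :: "('o, 'm) cat \<Rightarrow> ('m, 'm \<times> 'm) cat" where
  "Stilde_cat H = \<lparr>cobj = cmor H,
     cmor = {(h, g). h \<in> cmor H \<and> g \<in> cmor H \<and> ccod H h = ccod H g},
     cdom = snd, ccod = fst, cid = (\<lambda>g. (g, g)),
     ccomp = (\<lambda>(k, h') (h, g). (k, g))\<rparr>"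

definition Stilde :: "('o, 'm) cat \<Rightarrow> ('m, 'm \<times> 'm) qs" where
  "Stilde H = (Stilde_cat H,
     {{(k, l) \<in> cmor (Stilde_cat H). ccomp H (ginv H k) l = f} | f. f \<in> cmor H})"

definition Stilde_fun :: "('o, 'm) cat \<Rightarrow> ('o, 'm, 'o, 'm) fctr \<Rightarrow> ('m, 'm \<times> 'm, 'm, 'm \<times> 'm) fctr" where
  "Stilde_fun H u = ((\<lambda>i\<in>cmor H. snd u i),
     (\<lambda>p\<in>cmor (Stilde_cat H). (snd u (fst p), snd u (snd p))))"

definition S1 :: "('o, 'm) cat \<Rightarrow> ('o, 'm, 'o, 'm) fctr \<Rightarrow> ('m, 'm \<times> 'm, 'm, 'm \<times> 'm) fctr set" where
  "S1 H u = hcls (Stilde H) (Stilde_fun H u)"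

definition S2 :: "('o, 'm) cat \<Rightarrow> ('o, 'm, 'o, 'm) fctr \<Rightarrow> ('m, 'm \<times> 'm, 'm, 'm \<times> 'm) fctr set" where
  "S2 H u = acls (Stilde H) (Stilde_fun H u)"

end

theory Submission
  imports Defs
begin

text \<open>
  A self-morphism F of S~(G) is a functor on the pairs (k, l) of morphisms of G with a common
  codomain which maps blocks, the fibres of (k, l) \<mapsto> k\<inverse> l, into blocks. As (b, b c) and
  (1, c) lie in one block, a \<mapsto> F(a) F(1_{dom a})\<inverse> is a functor G \<rightarrow> G, the underlying
  functor of F; for F = S~(u) it is u. It is a complete homotopy invariant: the arrow component of a
  homotopy puts (K a, F a) and (K 1_{dom a}, F 1_{dom a}) into one block, which forces equal
  underlying functors; conversely two morphisms F, K with the same underlying functor are joined by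
  the homotopy that is F over 0, K over 1, and sends the arrow 0 \<rightarrow> 1 over (k, l) to
  (K k, F l). Hence \<simeq>-classes embed into the endofunctors of G, compatibly with composition,
  which gives the homomorphism and injectivity statements; moreover every automorphism F of S~(G)
  is \<simeq> to S~(u) for u its underlying functor, so S~_{*2} is onto, even for infinite G.
\<close>

lemma functor_obj: "is_functor C D F \<Longrightarrow> a \<in> cobj C \<Longrightarrow> fst F a \<in> cobj D"
  and functor_mor: "is_functor C D F \<Longrightarrow> f \<in> cmor C \<Longrightarrow> snd F f \<in> cmor D"
  and functor_dom: "is_functor C D F \<Longrightarrow> f \<in> cmor C \<Longrightarrow> cdom D (snd F f) = fst F (cdom C f)"
  and functor_cod: "is_functor C D F \<Longrightarrow> f \<in> cmor C \<Longrightarrow> ccod D (snd F f) = fst F (ccod C f)"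
  and functor_id: "is_functor C D F \<Longrightarrow> a \<in> cobj C \<Longrightarrow> snd F (cid C a) = cid D (fst F a)"
  and functor_comp: "is_functor C D F \<Longrightarrow> f \<in> cmor C \<Longrightarrow> g \<in> cmor C \<Longrightarrow> ccod C f = cdom C g \<Longrightarrow>
    snd F (ccomp C g f) = ccomp D (snd F g) (snd F f)"
  and functor_extensional: "is_functor C D F \<Longrightarrow> fst F \<in> extensional (cobj C)"
    "is_functor C D F \<Longrightarrow> snd F \<in> extensional (cmor C)"
  unfolding is_functor_def by blast+

lemma is_functor_fcomp:
  assumes F: "is_functor B C F" and K: "is_functor A B K" and cA: "is_cat A"
  shows "is_functor A C (fcomp A F K)"
  unfolding is_functor_def
proof (intro conjI ballI impI)
  fix a assume a: "a \<in> cobj A"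
  show "fst (fcomp A F K) a \<in> cobj C" using a functor_obj[OF F functor_obj[OF K a]] unfolding fcomp_def by simp
  have "cid A a \<in> cmor A" using cA a unfolding is_cat_def by blast
  then show "snd (fcomp A F K) (cid A a) = cid C (fst (fcomp A F K) a)"
    using a functor_id[OF K a] functor_id[OF F functor_obj[OF K a]] unfolding fcomp_def by simp
next
  fix f assume f: "f \<in> cmor A"
  have "cdom A f \<in> cobj A" "ccod A f \<in> cobj A" using cA f unfolding is_cat_def by blast+
  then show "snd (fcomp A F K) f \<in> cmor C"
    "cdom C (snd (fcomp A F K) f) = fst (fcomp A F K) (cdom A f)"
    "ccod C (snd (fcomp A F K) f) = fst (fcomp A F K) (ccod A f)"
    using f functor_mor[OF F functor_mor[OF K f]] functor_dom[OF F functor_mor[OF K f]]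
      functor_cod[OF F functor_mor[OF K f]] functor_dom[OF K f] functor_cod[OF K f]
    unfolding fcomp_def by simp_all
next
  fix f g assume f: "f \<in> cmor A" and g: "g \<in> cmor A" and fg: "ccod A f = cdom A g"
  have "ccomp A g f \<in> cmor A" using cA f g fg unfolding is_cat_def by blast
  then show "snd (fcomp A F K) (ccomp A g f) = ccomp C (snd (fcomp A F K) g) (snd (fcomp A F K) f)"
    using f g functor_comp[OF K f g fg] functor_comp[OF F functor_mor[OF K f] functor_mor[OF K g]]
      functor_dom[OF K g] functor_cod[OF K f] fg unfolding fcomp_def by simp
qed (simp_all add: fcomp_def)

lemma is_functor_fid: "is_cat C \<Longrightarrow> is_functor C C (fid C)"
  unfolding is_functor_def fid_def is_cat_def by auto

lemma fcomp_assoc: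
  assumes "is_functor C C K" and "is_functor C C L"
  shows "fcomp C (fcomp C F K) L = fcomp C F (fcomp C K L)"
  using functor_obj[OF assms(2)] functor_mor[OF assms(2)]
  unfolding fcomp_def by (auto intro!: restrict_ext)

lemma fcomp_fid_left:
  assumes F: "is_functor C C F"
  shows "fcomp C (fid C) F = F"
proof -
  have "fst (fcomp C (fid C) F) = fst F" "snd (fcomp C (fid C) F) = snd F"
    using functor_obj[OF F] functor_mor[OF F] functor_extensional[OF F]
    unfolding fcomp_def fid_def by (auto simp: extensional_def)
  then show ?thesis by (simp add: prod_eq_iff)
qed

lemma fcomp_inverse:
  assumes cC: "is_cat C"
    and F: "is_functor C C F" "is_functor C C F'" "fcomp C F F' = fid C"
    and K: "is_functor C C K" "is_functor C C K'" "fcomp C K K' = fid C"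
  shows "fcomp C (fcomp C F K) (fcomp C K' F') = fid C"
proof -
  have "fcomp C (fcomp C F K) (fcomp C K' F') = fcomp C F (fcomp C (fcomp C K K') F')"
    using fcomp_assoc is_functor_fcomp[OF _ _ cC] F K by metis
  then show ?thesis using F K by (simp add: fcomp_fid_left)
qed

lemma group_AutG:
  assumes cC: "is_cat C"
  shows "group (AutG C)"
proof (rule groupI)
  fix x y assume "x \<in> carrier (AutG C)" "y \<in> carrier (AutG C)"
  then obtain x' y' where x: "is_functor C C x" "is_functor C C x'" "fcomp C x' x = fid C" "fcomp C x x' = fid C"
    and y: "is_functor C C y" "is_functor C C y'" "fcomp C y' y = fid C" "fcomp C y y' = fid C"
    unfolding AutG_def is_autofunctor_def by auto
  then have "is_autofunctor C (fcomp C x y)"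
    unfolding is_autofunctor_def
    using fcomp_inverse[OF cC, of x x' y y'] fcomp_inverse[OF cC, of y' y x' x]
      is_functor_fcomp[OF _ _ cC] by blast
  then show "x \<otimes>\<^bsub>AutG C\<^esub> y \<in> carrier (AutG C)" unfolding AutG_def by simp
next
  have "is_autofunctor C (fid C)"
    unfolding is_autofunctor_def using is_functor_fid[OF cC] fcomp_fid_left by blast
  then show "\<one>\<^bsub>AutG C\<^esub> \<in> carrier (AutG C)" unfolding AutG_def by simp
next
  fix x y z assume "x \<in> carrier (AutG C)" "y \<in> carrier (AutG C)" "z \<in> carrier (AutG C)"
  then show "x \<otimes>\<^bsub>AutG C\<^esub> y \<otimes>\<^bsub>AutG C\<^esub> z = x \<otimes>\<^bsub>AutG C\<^esub> (y \<otimes>\<^bsub>AutG C\<^esub> z)"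
    unfolding AutG_def is_autofunctor_def by (simp add: fcomp_assoc)
next
  fix x assume "x \<in> carrier (AutG C)"
  then show "\<one>\<^bsub>AutG C\<^esub> \<otimes>\<^bsub>AutG C\<^esub> x = x"
    unfolding AutG_def is_autofunctor_def by (simp add: fcomp_fid_left)
next
  fix x assume "x \<in> carrier (AutG C)"
  then obtain x' where x: "is_functor C C x" "is_functor C C x'" "fcomp C x' x = fid C" "fcomp C x x' = fid C"
    unfolding AutG_def is_autofunctor_def by auto
  then have "is_autofunctor C x'" unfolding is_autofunctor_def by blast
  then show "\<exists>y\<in>carrier (AutG C). y \<otimes>\<^bsub>AutG C\<^esub> x = \<one>\<^bsub>AutG C\<^esub>"
    using x(3) by (intro bexI[of _ x']) (simp_all add: AutG_def)
qed

lemma compose_inverse: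
  assumes "f \<in> M \<rightarrow> M" "g \<in> M \<rightarrow> M" "g' \<in> M \<rightarrow> M" "f' \<in> M \<rightarrow> M"
    and "compose M f f' = (\<lambda>x\<in>M. x)" "compose M g g' = (\<lambda>x\<in>M. x)"
  shows "compose M (compose M f g) (compose M g' f') = (\<lambda>x\<in>M. x)"
proof -
  have "compose M f g (compose M g' f' x) = x" if x: "x \<in> M" for x
  proof -
    have f'x: "f' x \<in> M" using assms(4) x by blast
    then have "g (g' (f' x)) = f' x"
      using fun_cong[OF assms(6), of "f' x"] by (simp add: compose_def)
    moreover have "g' (f' x) \<in> M" using assms(3) f'x by blast
    ultimately show ?thesis
      using fun_cong[OF assms(5), of x] x f'x by (simp add: compose_def)
  qed
  then show ?thesis unfolding compose_def[of M "compose M f g"] by (rule restrict_ext)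
qed

lemma prod_cat_simps [simp]:
  "cobj (prod_cat C E) = cobj C \<times> cobj E" "cmor (prod_cat C E) = cmor C \<times> cmor E"
  "cdom (prod_cat C E) (f, g) = (cdom C f, cdom E g)" "ccod (prod_cat C E) (f, g) = (ccod C f, ccod E g)"
  "cid (prod_cat C E) (a, b) = (cid C a, cid E b)"
  "ccomp (prod_cat C E) (f, g) (f', g') = (ccomp C f f', ccomp E g g')"
  unfolding prod_cat_def by simp_all

lemma cat1_simps [simp]:
  "cobj cat1 = {0, 1}" "cmor cat1 = {(0, 0), (1, 1), (0, 1)}"
  "cdom cat1 = fst" "ccod cat1 = snd" "cid cat1 = (\<lambda>i. (i, i))" "ccomp cat1 = (\<lambda>g f. (fst f, snd g))"
  unfolding cat1_def by simp_all

section \<open>Groupoids\<close>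

locale groupoid =
  fixes G :: "('o, 'm) cat"
  assumes is_groupoid: "is_groupoid G"
begin

abbreviation "M \<equiv> cmor G"
abbreviation "Ob \<equiv> cobj G"
abbreviation "dm \<equiv> cdom G"
abbreviation "cd \<equiv> ccod G"
abbreviation "e \<equiv> cid G"
abbreviation "cp \<equiv> ccomp G"
abbreviation "iv \<equiv> ginv G"

lemma is_cat: "is_cat G"
  using is_groupoid unfolding is_groupoid_def by simp

lemma cdom_obj [simp]: "f \<in> M \<Longrightarrow> dm f \<in> Ob"
  and ccod_obj [simp]: "f \<in> M \<Longrightarrow> cd f \<in> Ob"
  using is_cat unfolding is_cat_def by auto

lemma cid_simps [simp]: "a \<in> Ob \<Longrightarrow> e a \<in> M" "a \<in> Ob \<Longrightarrow> dm (e a) = a" "a \<in> Ob \<Longrightarrow> cd (e a) = a"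
  using is_cat unfolding is_cat_def by auto

lemma ccomp_simps [simp]:
  assumes "f \<in> M" "g \<in> M" "cd f = dm g"
  shows "cp g f \<in> M" "dm (cp g f) = dm f" "cd (cp g f) = cd g"
  using is_cat assms unfolding is_cat_def by auto

lemma ccomp_assoc [simp]:
  assumes "f \<in> M" "g \<in> M" "h \<in> M" "cd f = dm g" "cd g = dm h"
  shows "cp (cp h g) f = cp h (cp g f)"
  using is_cat assms unfolding is_cat_def by metis

lemma ccomp_cid_right [simp]: "f \<in> M \<Longrightarrow> dm f = x \<Longrightarrow> cp f (e x) = f"
  and ccomp_cid_left [simp]: "f \<in> M \<Longrightarrow> cd f = x \<Longrightarrow> cp (e x) f = f"
  using is_cat unfolding is_cat_def by auto

lemma ginv_simps [simp]:
  assumes "f \<in> M"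
  shows "iv f \<in> M" "dm (iv f) = cd f" "cd (iv f) = dm f"
    "cp (iv f) f = e (dm f)" "cp f (iv f) = e (cd f)"
proof -
  have "\<exists>g. g \<in> M \<and> dm g = cd f \<and> cd g = dm f \<and> cp g f = e (dm f) \<and> cp f g = e (cd f)"
    using is_groupoid assms unfolding is_groupoid_def by blast
  from someI_ex[OF this] show "iv f \<in> M" "dm (iv f) = cd f" "cd (iv f) = dm f"
    "cp (iv f) f = e (dm f)" "cp f (iv f) = e (cd f)"
    unfolding ginv_def by blast+
qed

lemma ginv_cancel_left [simp]:
  assumes "f \<in> M" "g \<in> M" "cd g = dm f"
  shows "cp (iv f) (cp f g) = g"
  using ccomp_assoc[of g f "iv f"] assms by (simp del: ccomp_assoc)

lemma ginv_cancel_right [simp]: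
  assumes "f \<in> M" "g \<in> M" "cd g = cd f"
  shows "cp f (cp (iv f) g) = g"
  using ccomp_assoc[of g "iv f" f] assms by (simp del: ccomp_assoc)

lemma ginv_unique:
  assumes "g \<in> M" "f \<in> M" "dm g = cd f" "cp g f = e (dm f)"
  shows "g = iv f"
proof -
  have "g = cp (cp g f) (iv f)" using assms(1-3) by simp
  also have "\<dots> = iv f" using assms(2,4) by simp
  finally show ?thesis .
qed

lemma ginv_cid [simp]: "a \<in> Ob \<Longrightarrow> iv (e a) = e a"
  by (rule ginv_unique[symmetric]) simp_all

lemma ginv_ccomp [simp]:
  assumes "f \<in> M" "g \<in> M" "cd f = dm g"
  shows "iv (cp g f) = cp (iv f) (iv g)"
  by (rule ginv_unique[symmetric]) (use assms in simp_all)

lemma functor_ginv: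
  assumes u: "is_functor G G u" and a: "a \<in> M"
  shows "snd u (iv a) = iv (snd u a)"
proof (rule ginv_unique)
  show "snd u (iv a) \<in> M" "snd u a \<in> M" "dm (snd u (iv a)) = cd (snd u a)"
    using functor_mor[OF u] functor_dom[OF u] functor_cod[OF u] a by simp_all
  have "cp (snd u (iv a)) (snd u a) = snd u (cp (iv a) a)"
    using functor_comp[OF u, of a "iv a"] a by simp
  then show "cp (snd u (iv a)) (snd u a) = e (dm (snd u a))"
    using functor_id[OF u] functor_dom[OF u] a by simp
qed

lemma functor_obj_eq: "is_functor G G u \<Longrightarrow> x \<in> Ob \<Longrightarrow> fst u x = dm (snd u (e x))"
  using functor_id functor_obj by fastforce

end

section \<open>Morphisms of the quasi-schemoid of a groupoid\<close>

definition Stilde_block :: "('o, 'm) cat \<Rightarrow> 'm \<Rightarrow> ('m \<times> 'm) set" where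
  "Stilde_block G f =
     {(k, l). k \<in> cmor G \<and> l \<in> cmor G \<and> ccod G k = ccod G l \<and> ccomp G (ginv G k) l = f}"

definition underlying_mor :: "('o, 'm) cat \<Rightarrow> ('m, 'm \<times> 'm, 'm, 'm \<times> 'm) fctr \<Rightarrow> 'm \<Rightarrow> 'm" where
  "underlying_mor G F =
     (\<lambda>a\<in>cmor G. ccomp G (fst F a) (ginv G (fst F (cid G (cdom G a)))))"

context groupoid
begin

abbreviation "SC \<equiv> Stilde_cat G"
abbreviation "SG \<equiv> Stilde G"
abbreviation "blk \<equiv> Stilde_block G"
abbreviation "J \<equiv> underlying_mor G"

lemma Stilde_cat_simps [simp]:
  "cobj SC = M" "cmor SC = {(h, g). h \<in> M \<and> g \<in> M \<and> cd h = cd g}"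
  "cdom SC = snd" "ccod SC = fst" "cid SC = (\<lambda>g. (g, g))"
  "ccomp SC = (\<lambda>(k, h') (h, g). (k, g))"
  unfolding Stilde_cat_def by simp_all

lemma Stilde_simps [simp]: "fst SG = SC" "snd SG = {blk f | f. f \<in> M}"
  unfolding Stilde_def Stilde_block_def by auto

lemma Stilde_block_subset: "blk f \<subseteq> cmor SC"
  unfolding Stilde_block_def by auto

lemma is_cat_Stilde_cat: "is_cat SC"
  unfolding is_cat_def by auto

lemma qs_mor_functor: "qs_mor SG SG F \<Longrightarrow> is_functor SC SC F"
  unfolding qs_mor_def by simp

lemma qs_mor_Stilde_iff:
  "qs_mor SG SG F \<longleftrightarrow> is_functor SC SC F \<and> (\<forall>f\<in>M. \<exists>f'\<in>M. snd F ` blk f \<subseteq> blk f')"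
proof
  assume "qs_mor SG SG F"
  then show "is_functor SC SC F \<and> (\<forall>f\<in>M. \<exists>f'\<in>M. snd F ` blk f \<subseteq> blk f')"
    unfolding qs_mor_def by auto
next
  assume F: "is_functor SC SC F \<and> (\<forall>f\<in>M. \<exists>f'\<in>M. snd F ` blk f \<subseteq> blk f')"
  have "\<exists>\<tau>\<in>snd SG. snd F ` \<sigma> \<subseteq> \<tau>" if \<sigma>: "\<sigma> \<in> snd SG" for \<sigma>
  proof -
    obtain f where "\<sigma> = blk f" "f \<in> M" using \<sigma> by auto
    then obtain f' where "f' \<in> M" "snd F ` \<sigma> \<subseteq> blk f'" using F by blast
    then show ?thesis by (intro bexI[of _ "blk f'"]) auto
  qed
  then show "qs_mor SG SG F" using F unfolding qs_mor_def by simp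
qed

lemma qs_mor_block: "qs_mor SG SG F \<Longrightarrow> f \<in> M \<Longrightarrow> \<exists>f'\<in>M. snd F ` blk f \<subseteq> blk f'"
  unfolding qs_mor_Stilde_iff by blast

lemma qs_mor_obj: "qs_mor SG SG F \<Longrightarrow> a \<in> M \<Longrightarrow> fst F a \<in> M"
  using functor_obj[OF qs_mor_functor, of F a] by simp

lemma qs_mor_pair:
  assumes "qs_mor SG SG F" "k \<in> M" "l \<in> M" "cd k = cd l"
  shows "snd F (k, l) = (fst F k, fst F l)" "cd (fst F k) = cd (fst F l)"
proof -
  have m: "(k, l) \<in> cmor SC" using assms by simp
  have "snd F (k, l) \<in> cmor SC \<and> snd (snd F (k, l)) = fst F l \<and> fst (snd F (k, l)) = fst F k"
    using functor_mor[OF qs_mor_functor[OF assms(1)] m] functor_dom[OF qs_mor_functor[OF assms(1)] m]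
      functor_cod[OF qs_mor_functor[OF assms(1)] m] by simp
  then show "snd F (k, l) = (fst F k, fst F l)" "cd (fst F k) = cd (fst F l)"
    by (auto simp: prod_eq_iff)
qed

lemma qs_mor_block_eq:
  assumes F: "qs_mor SG SG F" and "(k, l) \<in> blk f" "(k', l') \<in> blk f"
  shows "cp (iv (fst F k)) (fst F l) = cp (iv (fst F k')) (fst F l')"
proof -
  have "f \<in> M" using assms(2) unfolding Stilde_block_def by auto
  then obtain f' where "snd F ` blk f \<subseteq> blk f'" using qs_mor_block[OF F] by blast
  then have "snd F (k, l) \<in> blk f'" "snd F (k', l') \<in> blk f'" using assms(2,3) by auto
  then show ?thesis
    using qs_mor_pair(1)[OF F] assms(2,3) unfolding Stilde_block_def by auto
qed

lemma qs_mor_dom: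
  assumes F: "qs_mor SG SG F" and a: "a \<in> M"
  shows "dm (fst F a) = dm (fst F (e (dm a)))"
proof -
  have "(a, a) \<in> blk (e (dm a))" "(e (dm a), e (dm a)) \<in> blk (e (dm a))"
    using a unfolding Stilde_block_def by auto
  from qs_mor_block_eq[OF F this] have "e (dm (fst F a)) = e (dm (fst F (e (dm a))))"
    using qs_mor_obj[OF F] a by simp
  then show ?thesis using cid_simps(2) qs_mor_obj[OF F] a by (metis cdom_obj cid_simps(1))
qed

lemma qs_mor_cod: "qs_mor SG SG F \<Longrightarrow> a \<in> M \<Longrightarrow> cd (fst F a) = cd (fst F (e (cd a)))"
  using qs_mor_pair(2)[of F a "e (cd a)"] by simp

lemma underlying_mor_eq: "a \<in> M \<Longrightarrow> J F a = cp (fst F a) (iv (fst F (e (dm a))))"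
  unfolding underlying_mor_def by simp

lemma underlying_mor_extensional: "J F \<in> extensional M"
  unfolding underlying_mor_def by simp

lemma underlying_mor_simps:
  assumes "qs_mor SG SG F" "a \<in> M"
  shows "J F a \<in> M" "dm (J F a) = cd (fst F (e (dm a)))" "cd (J F a) = cd (fst F a)"
  using assms qs_mor_obj[OF assms(1)] qs_mor_dom[OF assms] by (simp_all add: underlying_mor_eq)

lemma underlying_mor_cod:
  "qs_mor SG SG F \<Longrightarrow> a \<in> M \<Longrightarrow> cd (J F a) = cd (fst F (e (cd a)))"
  using underlying_mor_simps(3) qs_mor_cod by (rule trans)

lemma underlying_mor_factor:
  assumes "qs_mor SG SG F" "a \<in> M"
  shows "fst F a = cp (J F a) (fst F (e (dm a)))"
  using assms qs_mor_obj[OF assms(1)] qs_mor_dom[OF assms] by (simp add: underlying_mor_eq)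

lemma underlying_mor_cid:
  "qs_mor SG SG F \<Longrightarrow> x \<in> Ob \<Longrightarrow> J F (e x) = e (cd (fst F (e x)))"
  using qs_mor_obj by (simp add: underlying_mor_eq)

lemma underlying_mor_ccomp:
  assumes F: "qs_mor SG SG F" and bc: "b \<in> M" "c \<in> M" "cd c = dm b"
  shows "J F (cp b c) = cp (J F b) (J F c)"
proof -
  have "(b, cp b c) \<in> blk c" "(e (cd c), c) \<in> blk c"
    using bc unfolding Stilde_block_def by auto
  from qs_mor_block_eq[OF F this]
  have "cp (iv (fst F b)) (fst F (cp b c)) = cp (iv (fst F (e (cd c)))) (fst F c)" .
  then have "fst F (cp b c) = cp (fst F b) (cp (iv (fst F (e (cd c)))) (fst F c))"
    using ginv_cancel_right[of "fst F b" "fst F (cp b c)"] qs_mor_obj[OF F] qs_mor_pair(2)[OF F, of b "cp b c"] bc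
    by simp
  then show ?thesis
    using bc qs_mor_obj[OF F] qs_mor_dom[OF F bc(1)] qs_mor_dom[OF F bc(2)] qs_mor_cod[OF F bc(2)]
    by (simp add: underlying_mor_eq)
qed

lemma underlying_mor_ginv:
  assumes F: "qs_mor SG SG F" and a: "a \<in> M"
  shows "J F (iv a) = iv (J F a)"
proof (rule ginv_unique)
  show "J F (iv a) \<in> M" "J F a \<in> M" "dm (J F (iv a)) = cd (J F a)"
    using underlying_mor_simps[OF F] underlying_mor_cod[OF F] a by simp_all
  have "cp (J F (iv a)) (J F a) = J F (cp (iv a) a)"
    using underlying_mor_ccomp[OF F, of "iv a" a] a by simp
  then show "cp (J F (iv a)) (J F a) = e (dm (J F a))"
    using underlying_mor_cid[OF F] underlying_mor_simps[OF F] a by simp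
qed

subsection \<open>Homotopy classes are classified by the underlying functor\<close>

lemma htpy_arrow_block_eq:
  assumes "htpy SG SG F K" and a: "a \<in> M"
  shows "cd (fst K a) = cd (fst F a)"
    and "cp (iv (fst K a)) (fst F a) = cp (iv (fst K (e (dm a)))) (fst F (e (dm a)))"
proof -
  obtain H where H: "qs_mor (prod_qs SG qsI) SG H"
    and ends: "\<And>a. a \<in> M \<Longrightarrow> fst H (a, 0) = fst F a \<and> fst H (a, 1) = fst K a"
    using assms(1) unfolding htpy_def by auto
  have fH: "is_functor (prod_cat SC cat1) SC H" using H unfolding qs_mor_def prod_qs_def qsI_def by simp
  have arrow: "snd H ((b, b), (0, 1)) = (fst K b, fst F b) \<and> cd (fst K b) = cd (fst F b)"
    if b: "b \<in> M" for b
  proof -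
    have m: "((b, b), (0::nat, 1::nat)) \<in> cmor (prod_cat SC cat1)" using b by simp
    show ?thesis
      using functor_mor[OF fH m] functor_dom[OF fH m] functor_cod[OF fH m] ends b
      by (cases "snd H ((b, b), (0, 1))") simp
  qed
  then show "cd (fst K a) = cd (fst F a)" using a by blast
  let ?x = "e (dm a)"
  have "blk ?x \<in> snd SG" "{(0::nat, 1::nat)} \<in> snd qsI"
    using a unfolding qsI_def by auto
  then have "blk ?x \<times> {(0, 1)} \<in> snd (prod_qs SG qsI)"
    unfolding prod_qs_def snd_conv by blast
  then obtain \<tau> where "\<tau> \<in> snd SG" and sub: "snd H ` (blk ?x \<times> {(0, 1)}) \<subseteq> \<tau>"
    using H unfolding qs_mor_def by blast
  then obtain f' where f': "snd H ` (blk ?x \<times> {(0, 1)}) \<subseteq> blk f'" by auto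
  have "(a, a) \<in> blk ?x" "(?x, ?x) \<in> blk ?x" using a unfolding Stilde_block_def by auto
  then have "snd H ((a, a), (0, 1)) \<in> blk f'" "snd H ((?x, ?x), (0, 1)) \<in> blk f'"
    using f' by blast+
  then have "(fst K a, fst F a) \<in> blk f'" "(fst K ?x, fst F ?x) \<in> blk f'"
    using arrow a by simp_all
  then show "cp (iv (fst K a)) (fst F a) = cp (iv (fst K ?x)) (fst F ?x)"
    unfolding Stilde_block_def by auto
qed

lemma htpy_underlying_mor_eq:
  assumes FK: "htpy SG SG F K"
  shows "J F = J K"
proof (rule extensionalityI[OF underlying_mor_extensional underlying_mor_extensional])
  fix a assume a: "a \<in> M"
  have F: "qs_mor SG SG F" and K: "qs_mor SG SG K" using FK unfolding htpy_def by auto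
  let ?x = "e (dm a)"
  have x: "?x \<in> M" "dm ?x = dm a" using a by simp_all
  define w where "w = cp (iv (fst K a)) (fst F a)"
  have Fa: "fst F a \<in> M" "fst K a \<in> M" "fst F ?x \<in> M" "fst K ?x \<in> M"
    using qs_mor_obj F K a x by auto
  have w: "w \<in> M" "dm w = dm (fst F ?x)" "cd w = dm (fst K ?x)"
    unfolding w_def using Fa htpy_arrow_block_eq(1)[OF FK a] qs_mor_dom[OF F a] qs_mor_dom[OF K a]
    by simp_all
  have "fst F a = cp (fst K a) w"
    unfolding w_def using Fa htpy_arrow_block_eq(1)[OF FK a] by simp
  moreover have "fst F ?x = cp (fst K ?x) w"
    unfolding w_def htpy_arrow_block_eq(2)[OF FK a] using Fa htpy_arrow_block_eq(1)[OF FK x(1)] by simp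
  ultimately have "J F a = cp (cp (fst K a) w) (iv (cp (fst K ?x) w))"
    using underlying_mor_eq a by simp
  also have "\<dots> = cp (fst K a) (iv (fst K ?x))"
    using Fa w qs_mor_dom[OF K a] by simp
  also have "\<dots> = J K a" using underlying_mor_eq a by simp
  finally show "J F a = J K a" .
qed

end

definition htpy_level :: "('a, 'b, 'c, 'd) fctr \<Rightarrow> ('a, 'b, 'c, 'd) fctr \<Rightarrow> nat \<Rightarrow> 'a \<Rightarrow> 'c" where
  "htpy_level F K i = (if i = 0 then fst F else fst K)"

definition straight_htpy ::
  "('o, 'm) cat \<Rightarrow> ('m, 'm \<times> 'm, 'm, 'm \<times> 'm) fctr \<Rightarrow> ('m, 'm \<times> 'm, 'm, 'm \<times> 'm) fctr \<Rightarrow>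
     ('m \<times> nat, ('m \<times> 'm) \<times> (nat \<times> nat), 'm, 'm \<times> 'm) fctr" where
  "straight_htpy G F K =
     ((\<lambda>p\<in>cmor G \<times> cobj cat1. htpy_level F K (snd p) (fst p)),
      (\<lambda>m\<in>cmor (Stilde_cat G) \<times> cmor cat1.
         (htpy_level F K (snd (snd m)) (fst (fst m)), htpy_level F K (fst (snd m)) (snd (fst m)))))"

context groupoid
begin

lemma straight_htpy_obj:
  "a \<in> M \<Longrightarrow> i \<in> cobj cat1 \<Longrightarrow> fst (straight_htpy G F K) (a, i) = htpy_level F K i a"
  unfolding straight_htpy_def by simp

lemma straight_htpy_mor:
  "(k, l) \<in> cmor SC \<Longrightarrow> (i, j) \<in> cmor cat1 \<Longrightarrow>
    snd (straight_htpy G F K) ((k, l), (i, j)) = (htpy_level F K j k, htpy_level F K i l)"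
  unfolding straight_htpy_def by simp

lemma htpy_level_simps:
  assumes F: "qs_mor SG SG F" and K: "qs_mor SG SG K" and FK: "J F = J K"
  shows "a \<in> M \<Longrightarrow> htpy_level F K i a \<in> M"
    and "k \<in> M \<Longrightarrow> l \<in> M \<Longrightarrow> cd k = cd l \<Longrightarrow> cd (htpy_level F K i k) = cd (htpy_level F K j l)"
proof -
  show "a \<in> M \<Longrightarrow> htpy_level F K i a \<in> M"
    using qs_mor_obj[OF F] qs_mor_obj[OF K] unfolding htpy_level_def by simp
  assume kl: "k \<in> M" "l \<in> M" "cd k = cd l"
  have "cd (fst F a) = cd (fst K a)" if "a \<in> M" for a
    using underlying_mor_simps(3)[OF F that] underlying_mor_simps(3)[OF K that] FK by simp
  then show "cd (htpy_level F K i k) = cd (htpy_level F K j l)"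
    using qs_mor_pair(2)[OF F kl] qs_mor_pair(2)[OF K kl] kl unfolding htpy_level_def by simp
qed

lemma is_functor_straight_htpy:
  assumes F: "qs_mor SG SG F" and K: "qs_mor SG SG K" and FK: "J F = J K"
  shows "is_functor (prod_cat SC cat1) SC (straight_htpy G F K)"
  unfolding is_functor_def
proof (intro conjI ballI impI)
  fix p assume "p \<in> cobj (prod_cat SC cat1)"
  then show "fst (straight_htpy G F K) p \<in> cobj SC"
    using htpy_level_simps(1)[OF F K FK] unfolding straight_htpy_def prod_cat_def by auto
  then show "snd (straight_htpy G F K) (cid (prod_cat SC cat1) p) =
      cid SC (fst (straight_htpy G F K) p)"
    using \<open>p \<in> cobj (prod_cat SC cat1)\<close> unfolding straight_htpy_def prod_cat_def cat1_def by auto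
next
  fix m assume "m \<in> cmor (prod_cat SC cat1)"
  then show "snd (straight_htpy G F K) m \<in> cmor SC"
    "cdom SC (snd (straight_htpy G F K) m) = fst (straight_htpy G F K) (cdom (prod_cat SC cat1) m)"
    "ccod SC (snd (straight_htpy G F K) m) = fst (straight_htpy G F K) (ccod (prod_cat SC cat1) m)"
    using htpy_level_simps[OF F K FK] unfolding straight_htpy_def prod_cat_def cat1_def by auto
next
  fix f g assume "f \<in> cmor (prod_cat SC cat1)" "g \<in> cmor (prod_cat SC cat1)"
    "ccod (prod_cat SC cat1) f = cdom (prod_cat SC cat1) g"
  then show "snd (straight_htpy G F K) (ccomp (prod_cat SC cat1) g f) =
      ccomp SC (snd (straight_htpy G F K) g) (snd (straight_htpy G F K) f)"
    unfolding straight_htpy_def prod_cat_def cat1_def by auto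
qed (simp_all add: straight_htpy_def)

lemma mixed_block_eq:
  assumes F: "qs_mor SG SG F" and K: "qs_mor SG SG K" and FK: "J F = J K"
    and kl: "(k, l) \<in> blk f"
  shows "cp (iv (fst K k)) (fst F l) = cp (iv (fst K (e (cd f)))) (cp (J F f) (fst F (e (dm f))))"
proof -
  have k: "k \<in> M" and l: "l \<in> M" and "cd k = cd l" and f: "f = cp (iv k) l"
    using kl unfolding Stilde_block_def by auto
  then have fM: "f \<in> M" and "dm f = dm l" and dk: "dm k = cd f" and "l = cp k f" by simp_all
  let ?Kc = "fst K (e (cd f))" and ?Fd = "fst F (e (dm f))"
  have "fst F l = cp (cp (J F k) (J F f)) ?Fd"
    using underlying_mor_factor[OF F l] underlying_mor_ccomp[OF F k fM] \<open>l = cp k f\<close> \<open>dm f = dm l\<close> dk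
    by simp
  moreover have "fst K k = cp (J F k) ?Kc"
    using underlying_mor_factor[OF K k] FK dk by simp
  moreover have "cd ?Kc = cd (fst F (e (cd f)))"
    using htpy_level_simps(2)[OF F K FK, of "e (cd f)" "e (cd f)" 1 0] fM
    by (simp add: htpy_level_def)
  moreover have "J F k \<in> M" "J F f \<in> M" "?Kc \<in> M" "?Fd \<in> M"
    using underlying_mor_simps(1)[OF F] qs_mor_obj[OF F] qs_mor_obj[OF K] k fM by simp_all
  moreover have "dm (J F k) = cd (fst F (e (cd f)))" "cd (J F f) = cd (fst F (e (cd f)))"
    "dm (J F f) = cd ?Fd"
    using underlying_mor_simps(2)[OF F k] underlying_mor_cod[OF F fM] underlying_mor_simps(2)[OF F fM] dk
    by simp_all
  ultimately show ?thesis by simp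
qed

lemma straight_htpy_arrow_block:
  assumes F: "qs_mor SG SG F" and K: "qs_mor SG SG K" and FK: "J F = J K" and f: "f \<in> M"
  defines "v \<equiv> cp (iv (fst K (e (cd f)))) (cp (J F f) (fst F (e (dm f))))"
  shows "v \<in> M" and "snd (straight_htpy G F K) ` (blk f \<times> {(0, 1)}) \<subseteq> blk v"
proof -
  show "v \<in> M"
    using f underlying_mor_simps[OF F f] underlying_mor_cod[OF F f] qs_mor_obj[OF F] qs_mor_obj[OF K]
      htpy_level_simps(2)[OF F K FK, of "e (cd f)" "e (cd f)" 1 0]
    unfolding v_def by (simp add: htpy_level_def)
  show "snd (straight_htpy G F K) ` (blk f \<times> {(0, 1)}) \<subseteq> blk v"
  proof
    fix y assume "y \<in> snd (straight_htpy G F K) ` (blk f \<times> {(0, 1)})"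
    then obtain k l where kl: "(k, l) \<in> blk f" and y: "y = snd (straight_htpy G F K) ((k, l), (0, 1))"
      by auto
    then have "k \<in> M" "l \<in> M" "cd k = cd l" unfolding Stilde_block_def by auto
    then show "y \<in> blk v" unfolding y v_def
      using straight_htpy_mor[of k l 0 1 F K] mixed_block_eq[OF F K FK kl]
        htpy_level_simps(2)[OF F K FK, of k l 1 0] qs_mor_obj[OF F] qs_mor_obj[OF K]
      unfolding Stilde_block_def by (simp add: htpy_level_def)
  qed
qed

lemma straight_htpy_block:
  assumes F: "qs_mor SG SG F" and K: "qs_mor SG SG K" and FK: "J F = J K"
    and f: "f \<in> M" and c: "c \<in> cmor cat1"
  shows "\<exists>f'\<in>M. snd (straight_htpy G F K) ` (blk f \<times> {c}) \<subseteq> blk f'"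
proof -
  have level: "snd (straight_htpy G F K) ` (blk f \<times> {(i, i)}) = snd X ` blk f"
    if X: "X = (if i = 0 then F else K)" and i: "(i, i) \<in> cmor cat1" for X i
  proof -
    have "snd (straight_htpy G F K) (p, (i, i)) = snd X p" if p: "p \<in> blk f" for p
    proof -
      obtain k l where "p = (k, l)" "k \<in> M" "l \<in> M" "cd k = cd l"
        using p unfolding Stilde_block_def by auto
      then show ?thesis
        using straight_htpy_mor[of k l i i F K] i qs_mor_pair(1)[OF F] qs_mor_pair(1)[OF K] X
        by (simp add: htpy_level_def)
    qed
    then have "(\<lambda>p. snd (straight_htpy G F K) (p, (i, i))) ` blk f = snd X ` blk f"
      by (rule image_cong[OF refl])
    moreover have "snd (straight_htpy G F K) ` (blk f \<times> {(i, i)}) =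
        (\<lambda>p. snd (straight_htpy G F K) (p, (i, i))) ` blk f"
      by auto
    ultimately show ?thesis by simp
  qed
  consider "c = (0, 0)" | "c = (1, 1)" | "c = (0, 1)" using c by auto
  then show ?thesis
  proof cases
    case 1
    then show ?thesis using level[of F 0] qs_mor_block[OF F f] by simp
  next
    case 2
    then show ?thesis using level[of K 1] qs_mor_block[OF K f] by simp
  next
    case 3
    then show ?thesis using straight_htpy_arrow_block[OF F K FK f] by blast
  qed
qed

lemma qs_mor_straight_htpy:
  assumes F: "qs_mor SG SG F" and K: "qs_mor SG SG K" and FK: "J F = J K"
  shows "qs_mor (prod_qs SG qsI) SG (straight_htpy G F K)"
proof -
  have "\<exists>\<tau>\<in>snd SG. snd (straight_htpy G F K) ` \<sigma> \<subseteq> \<tau>" if \<sigma>: "\<sigma> \<in> snd (prod_qs SG qsI)" for \<sigma>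
  proof -
    obtain f c where "\<sigma> = blk f \<times> {c}" "f \<in> M" "c \<in> cmor cat1"
      using \<sigma> unfolding prod_qs_def qsI_def by auto
    then obtain f' where "f' \<in> M" "snd (straight_htpy G F K) ` \<sigma> \<subseteq> blk f'"
      using straight_htpy_block[OF assms] by metis
    then show ?thesis by (intro bexI[of _ "blk f'"]) auto
  qed
  then show ?thesis
    using is_functor_straight_htpy[OF assms] unfolding qs_mor_def prod_qs_def qsI_def by simp
qed
lemma htpy_if_underlying_mor_eq:
  assumes F: "qs_mor SG SG F" and K: "qs_mor SG SG K" and FK: "J F = J K"
  shows "htpy SG SG F K"
  unfolding htpy_def
proof (intro conjI exI)
  show "qs_mor (prod_qs SG qsI) SG (straight_htpy G F K)" by (rule qs_mor_straight_htpy[OF assms])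
  show "\<forall>a\<in>cobj (fst SG). fst (straight_htpy G F K) (a, 0) = fst F a \<and> fst (straight_htpy G F K) (a, 1) = fst K a"
    by (simp add: straight_htpy_obj cat1_def htpy_level_def)
  show "\<forall>f\<in>cmor (fst SG). snd (straight_htpy G F K) (f, (0, 0)) = snd F f \<and> snd (straight_htpy G F K) (f, (1, 1)) = snd K f"
    using straight_htpy_mor qs_mor_pair(1)[OF F] qs_mor_pair(1)[OF K] by (auto simp: cat1_def htpy_level_def)
qed (use assms in blast)+

lemma htpc_iff_underlying_mor_eq:
  "htpc SG SG F K \<longleftrightarrow> qs_mor SG SG F \<and> qs_mor SG SG K \<and> J F = J K"
proof
  assume "htpc SG SG F K"
  then have "(F, K) \<in> (htpy_sim SG SG)\<^sup>*" and "qs_mor SG SG F \<and> qs_mor SG SG K"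
    unfolding htpc_def by auto
  moreover from this(1) have "J F = J K"
    by (induction rule: rtrancl_induct) (auto simp: htpy_sim_def dest: htpy_underlying_mor_eq)
  ultimately show "qs_mor SG SG F \<and> qs_mor SG SG K \<and> J F = J K" by blast
next
  assume "qs_mor SG SG F \<and> qs_mor SG SG K \<and> J F = J K"
  then show "htpc SG SG F K"
    using htpy_if_underlying_mor_eq unfolding htpc_def htpy_sim_def by blast
qed

lemma qs_mor_fcomp:
  assumes F: "qs_mor SG SG F" and K: "qs_mor SG SG K"
  shows "qs_mor SG SG (fcomp SC F K)"
proof -
  have "\<exists>f''\<in>M. snd (fcomp SC F K) ` blk f \<subseteq> blk f''" if f: "f \<in> M" for f
  proof -
    obtain f' where f': "f' \<in> M" "snd K ` blk f \<subseteq> blk f'" using qs_mor_block[OF K f] by blast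
    obtain f'' where f'': "f'' \<in> M" "snd F ` blk f' \<subseteq> blk f''" using qs_mor_block[OF F f'(1)] by blast
    have "snd (fcomp SC F K) ` blk f = snd F ` snd K ` blk f"
      using Stilde_block_subset unfolding fcomp_def by force
    then show ?thesis using f' f'' by blast
  qed
  then show ?thesis
    using is_functor_fcomp[OF qs_mor_functor[OF F] qs_mor_functor[OF K] is_cat_Stilde_cat]
    unfolding qs_mor_Stilde_iff by blast
qed

lemma underlying_mor_fcomp:
  assumes F: "qs_mor SG SG F" and K: "qs_mor SG SG K"
  shows "J (fcomp SC F K) = compose M (J F) (J K)"
proof (rule extensionalityI[OF underlying_mor_extensional compose_extensional])
  fix a assume a: "a \<in> M"
  let ?x = "e (dm a)"
  have Ka: "fst K a \<in> M" "fst K ?x \<in> M" "cd (fst K ?x) = dm (J K a)"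
    using qs_mor_obj[OF K] underlying_mor_simps[OF K a] a by simp_all
  have "J F (J K a) = J F (cp (fst K a) (iv (fst K ?x)))"
    using underlying_mor_eq a by simp
  also have "\<dots> = cp (J F (fst K a)) (iv (J F (fst K ?x)))"
    using Ka qs_mor_dom[OF K a] underlying_mor_ccomp[OF F] underlying_mor_ginv[OF F] by simp
  also have "\<dots> = cp (fst F (fst K a)) (iv (fst F (fst K ?x)))"
    using Ka qs_mor_obj[OF F] qs_mor_dom[OF F Ka(1)] qs_mor_dom[OF F Ka(2)] qs_mor_dom[OF K a]
    by (simp add: underlying_mor_eq)
  also have "\<dots> = J (fcomp SC F K) a"
    using a by (simp add: underlying_mor_eq fcomp_def)
  finally show "J (fcomp SC F K) a = compose M (J F) (J K) a"
    using a by (simp add: compose_eq)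
qed

lemma qs_mor_fid: "qs_mor SG SG (fid SC)"
proof -
  have "snd (fid SC) ` blk f \<subseteq> blk f" for f
    using Stilde_block_subset unfolding fid_def by (auto simp del: Stilde_cat_simps)
  then show ?thesis
    using is_functor_fid[OF is_cat_Stilde_cat] unfolding qs_mor_Stilde_iff by blast
qed

lemma underlying_mor_fid: "J (fid SC) = (\<lambda>a\<in>M. a)"
  by (rule extensionalityI[OF underlying_mor_extensional]) (simp_all add: underlying_mor_eq fid_def)

lemma underlying_mor_closed: "qs_mor SG SG F \<Longrightarrow> J F \<in> M \<rightarrow> M"
  using underlying_mor_simps(1) by blast

lemma Stilde_fun_simps:
  "a \<in> M \<Longrightarrow> fst (Stilde_fun G u) a = snd u a"
  "(k, l) \<in> cmor SC \<Longrightarrow> snd (Stilde_fun G u) (k, l) = (snd u k, snd u l)"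
  unfolding Stilde_fun_def by simp_all

lemma qs_mor_Stilde_fun:
  assumes u: "is_functor G G u"
  shows "qs_mor SG SG (Stilde_fun G u)"
proof -
  have uM: "snd u a \<in> M" "cd (snd u a) = fst u (cd a)" if "a \<in> M" for a
    using functor_mor[OF u that] functor_cod[OF u that] by simp_all
  have "is_functor SC SC (Stilde_fun G u)"
    unfolding is_functor_def
  proof (intro conjI ballI impI)
    fix m assume "m \<in> cmor SC"
    then show "snd (Stilde_fun G u) m \<in> cmor SC"
      "cdom SC (snd (Stilde_fun G u) m) = fst (Stilde_fun G u) (cdom SC m)"
      "ccod SC (snd (Stilde_fun G u) m) = fst (Stilde_fun G u) (ccod SC m)"
      using uM by (auto simp: Stilde_fun_simps)
  next
    fix f g assume "f \<in> cmor SC" "g \<in> cmor SC" "ccod SC f = cdom SC g"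
    then show "snd (Stilde_fun G u) (ccomp SC g f) =
        ccomp SC (snd (Stilde_fun G u) g) (snd (Stilde_fun G u) f)"
      by (auto simp: Stilde_fun_simps)
  qed (use uM in \<open>auto simp: Stilde_fun_simps Stilde_fun_def\<close>)
  moreover have "snd (Stilde_fun G u) ` blk f \<subseteq> blk (snd u f)" for f
  proof
    fix y assume "y \<in> snd (Stilde_fun G u) ` blk f"
    then obtain k l where kl: "k \<in> M" "l \<in> M" "cd k = cd l" "cp (iv k) l = f"
      and y: "y = snd (Stilde_fun G u) (k, l)"
      unfolding Stilde_block_def by auto
    have "cp (iv (snd u k)) (snd u l) = snd u f"
      using functor_ginv[OF u kl(1)] functor_comp[OF u, of l "iv k"] kl by simp
    then show "y \<in> blk (snd u f)"
      using y kl uM unfolding Stilde_block_def by (simp add: Stilde_fun_simps)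
  qed
  ultimately show ?thesis
    unfolding qs_mor_Stilde_iff using uM by blast
qed

lemma underlying_mor_Stilde_fun:
  assumes u: "is_functor G G u"
  shows "J (Stilde_fun G u) = snd u"
proof (rule extensionalityI[OF underlying_mor_extensional functor_extensional(2)[OF u]])
  fix a assume a: "a \<in> M"
  then show "J (Stilde_fun G u) a = snd u a"
    using functor_id[OF u] functor_mor[OF u a] functor_dom[OF u a] functor_obj[OF u cdom_obj[OF a]]
    by (simp add: underlying_mor_eq Stilde_fun_simps)
qed

lemma Stilde_fun_fcomp:
  assumes "is_functor G G u" "is_functor G G v"
  shows "Stilde_fun G (fcomp G u v) = fcomp SC (Stilde_fun G u) (Stilde_fun G v)"
  using functor_mor[OF assms(2)] functor_cod[OF assms(2)]
  unfolding Stilde_fun_def fcomp_def by (auto intro!: restrict_ext)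

lemma Stilde_fun_fid: "Stilde_fun G (fid G) = fid SC"
  unfolding Stilde_fun_def fid_def by (auto intro!: restrict_ext)

lemma qs_aut_Stilde_fun:
  assumes "is_autofunctor G u"
  shows "qs_aut SG (Stilde_fun G u)"
proof -
  obtain u' where u: "is_functor G G u" "is_functor G G u'" "fcomp G u' u = fid G" "fcomp G u u' = fid G"
    using assms unfolding is_autofunctor_def by blast
  then have "fcomp SC (Stilde_fun G u') (Stilde_fun G u) = fid SC"
    "fcomp SC (Stilde_fun G u) (Stilde_fun G u') = fid SC"
    using Stilde_fun_fcomp Stilde_fun_fid by metis+
  then show ?thesis
    unfolding qs_aut_def Stilde_simps(1) using qs_mor_Stilde_fun u by blast
qed

lemma functor_eqI:
  assumes u: "is_functor G G u" and v: "is_functor G G v" and uv: "snd u = snd v"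
  shows "u = v"
proof -
  have "fst u = fst v"
    by (rule extensionalityI[OF functor_extensional(1)[OF u] functor_extensional(1)[OF v]])
      (simp add: functor_obj_eq[OF u] functor_obj_eq[OF v] uv)
  then show ?thesis using uv by (simp add: prod_eq_iff)
qed

end

definition underlying_functor ::
  "('o, 'm) cat \<Rightarrow> ('m, 'm \<times> 'm, 'm, 'm \<times> 'm) fctr \<Rightarrow> ('o, 'm, 'o, 'm) fctr" where
  "underlying_functor G F = ((\<lambda>x\<in>cobj G. ccod G (fst F (cid G x))), underlying_mor G F)"

context groupoid
begin

lemma is_functor_underlying_functor:
  assumes F: "qs_mor SG SG F"
  shows "is_functor G G (underlying_functor G F)"
  unfolding is_functor_def underlying_functor_def
  using underlying_mor_simps[OF F] underlying_mor_cod[OF F] underlying_mor_cid[OF F]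
    underlying_mor_ccomp[OF F] underlying_mor_extensional qs_mor_obj[OF F]
  by simp

lemma fcomp_underlying_functor:
  assumes F: "qs_mor SG SG F" and K: "qs_mor SG SG K" and KF: "fcomp SC K F = fid SC"
  shows "fcomp G (underlying_functor G K) (underlying_functor G F) = fid G"
proof -
  let ?u = "underlying_functor G F" and ?v = "underlying_functor G K"
  have JKF: "J K (J F a) = a" if "a \<in> M" for a
    using fun_cong[OF underlying_mor_fcomp[OF K F], of a] KF underlying_mor_fid that
    by (simp add: compose_eq)
  have u: "is_functor G G ?u" and v: "is_functor G G ?v"
    using is_functor_underlying_functor F K by blast+
  show ?thesis
  proof (rule functor_eqI[OF is_functor_fcomp[OF v u is_cat] is_functor_fid[OF is_cat]])
    show "snd (fcomp G ?v ?u) = snd (fid G)"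
      using JKF unfolding fcomp_def fid_def underlying_functor_def by (auto intro!: restrict_ext)
  qed
qed

lemma is_autofunctor_underlying_functor:
  assumes "qs_aut SG F"
  shows "is_autofunctor G (underlying_functor G F)"
proof -
  obtain K where F: "qs_mor SG SG F" and K: "qs_mor SG SG K"
    and "fcomp SC K F = fid SC" "fcomp SC F K = fid SC"
    using assms unfolding qs_aut_def by auto
  then show ?thesis
    unfolding is_autofunctor_def
    using is_functor_underlying_functor fcomp_underlying_functor by blast
qed

lemma underlying_mor_Stilde_fun_underlying_functor:
  "qs_mor SG SG F \<Longrightarrow> J (Stilde_fun G (underlying_functor G F)) = J F"
  using underlying_mor_Stilde_fun[OF is_functor_underlying_functor]
  by (simp add: underlying_functor_def)

subsection \<open>The groups of homotopy classes\<close>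

lemma qs_aut_qs_mor: "qs_aut SG F \<Longrightarrow> qs_mor SG SG F"
  unfolding qs_aut_def by simp

lemma hcls_eq: "qs_mor SG SG F \<Longrightarrow> hcls SG F = {K. qs_mor SG SG K \<and> J K = J F}"
  unfolding hcls_def htpc_iff_underlying_mor_eq by auto

lemma acls_eq: "qs_mor SG SG F \<Longrightarrow> acls SG F = {K. qs_aut SG K \<and> J K = J F}"
  unfolding acls_def htpc_iff_underlying_mor_eq using qs_aut_qs_mor by auto

lemma hcls_eq_iff:
  "qs_mor SG SG F \<Longrightarrow> qs_mor SG SG K \<Longrightarrow> hcls SG F = hcls SG K \<longleftrightarrow> J F = J K"
  by (auto simp: hcls_eq)

lemma acls_eq_iff: "qs_aut SG F \<Longrightarrow> qs_aut SG K \<Longrightarrow> acls SG F = acls SG K \<longleftrightarrow> J F = J K"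
  using qs_aut_qs_mor by (auto simp: acls_eq)

lemma some_hcls:
  assumes "qs_mor SG SG F"
  shows "qs_mor SG SG (SOME X. X \<in> hcls SG F) \<and> J (SOME X. X \<in> hcls SG F) = J F"
proof -
  have "F \<in> hcls SG F" using assms hcls_eq by simp
  then have "(SOME X. X \<in> hcls SG F) \<in> hcls SG F" by (rule someI)
  then show ?thesis using assms hcls_eq by simp
qed

lemma some_acls:
  assumes "qs_aut SG F"
  shows "qs_aut SG (SOME X. X \<in> acls SG F) \<and> J (SOME X. X \<in> acls SG F) = J F"
proof -
  have "F \<in> acls SG F" using assms acls_eq qs_aut_qs_mor by simp
  then have "(SOME X. X \<in> acls SG F) \<in> acls SG F" by (rule someI)
  then show ?thesis using assms acls_eq qs_aut_qs_mor by simp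
qed

lemma haut_mult:
  assumes "qs_mor SG SG F" "qs_mor SG SG K"
  shows "hcls SG F \<otimes>\<^bsub>haut SG\<^esub> hcls SG K = hcls SG (fcomp SC F K)"
  using some_hcls[OF assms(1)] some_hcls[OF assms(2)] assms
  by (simp add: haut_def hcls_eq_iff qs_mor_fcomp underlying_mor_fcomp)

lemma qs_aut_fcomp:
  assumes F: "qs_aut SG F" and K: "qs_aut SG K"
  shows "qs_aut SG (fcomp SC F K)"
proof -
  obtain F' K' where F': "qs_mor SG SG F'" "fcomp SC F' F = fid SC" "fcomp SC F F' = fid SC"
    and K': "qs_mor SG SG K'" "fcomp SC K' K = fid SC" "fcomp SC K K' = fid SC"
    using F K unfolding qs_aut_def by auto
  have functors: "is_functor SC SC F" "is_functor SC SC F'" "is_functor SC SC K" "is_functor SC SC K'"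
    using qs_mor_functor qs_aut_qs_mor F K F'(1) K'(1) by blast+
  have "fcomp SC (fcomp SC K' F') (fcomp SC F K) = fid SC"
    "fcomp SC (fcomp SC F K) (fcomp SC K' F') = fid SC"
    using fcomp_inverse[OF is_cat_Stilde_cat] functors F' K' by blast+
  moreover have "qs_mor SG SG (fcomp SC F K)" "qs_mor SG SG (fcomp SC K' F')"
    using qs_mor_fcomp qs_aut_qs_mor F K F'(1) K'(1) by blast+
  ultimately show ?thesis unfolding qs_aut_def Stilde_simps(1) by blast
qed

lemma qs_aut_fid: "qs_aut SG (fid SC)"
  unfolding qs_aut_def Stilde_simps(1)
  using qs_mor_fid fcomp_fid_left[OF is_functor_fid[OF is_cat_Stilde_cat]] by blast

lemma hAut_mult:
  assumes "qs_aut SG F" "qs_aut SG K"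
  shows "acls SG F \<otimes>\<^bsub>hAut SG\<^esub> acls SG K = acls SG (fcomp SC F K)"
  using some_acls[OF assms(1)] some_acls[OF assms(2)] assms qs_aut_qs_mor
  by (simp add: hAut_def acls_eq_iff qs_aut_fcomp underlying_mor_fcomp)

lemma haut_carrier: "carrier (haut SG) = {hcls SG F | F. self_heq SG F}"
  and haut_one: "\<one>\<^bsub>haut SG\<^esub> = hcls SG (fid SC)"
  and hAut_carrier: "carrier (hAut SG) = {acls SG F | F. qs_aut SG F}"
  and hAut_one: "\<one>\<^bsub>hAut SG\<^esub> = acls SG (fid SC)"
  by (simp_all add: haut_def hAut_def)

lemma htpc_fcomp_fid_iff:
  "qs_mor SG SG F \<Longrightarrow> qs_mor SG SG K \<Longrightarrow>
    htpc SG SG (fcomp SC F K) (fid SC) \<longleftrightarrow> compose M (J F) (J K) = (\<lambda>a\<in>M. a)"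
  by (simp add: htpc_iff_underlying_mor_eq qs_mor_fcomp qs_mor_fid underlying_mor_fcomp
      underlying_mor_fid)

lemma self_heq_iff:
  "self_heq SG F \<longleftrightarrow> qs_mor SG SG F \<and> (\<exists>K. qs_mor SG SG K \<and>
     compose M (J F) (J K) = (\<lambda>a\<in>M. a) \<and> compose M (J K) (J F) = (\<lambda>a\<in>M. a))"
  unfolding self_heq_def Stilde_simps(1) using htpc_fcomp_fid_iff by blast

lemma qs_aut_self_heq:
  assumes "qs_aut SG F"
  shows "self_heq SG F"
proof -
  obtain K where "qs_mor SG SG F" "qs_mor SG SG K" "fcomp SC K F = fid SC" "fcomp SC F K = fid SC"
    using assms unfolding qs_aut_def by auto
  moreover have "htpc SG SG (fid SC) (fid SC)"
    using qs_mor_fid by (simp add: htpc_iff_underlying_mor_eq)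
  ultimately show ?thesis unfolding self_heq_def Stilde_simps(1) by metis
qed

lemma self_heq_fcomp:
  assumes "self_heq SG F" "self_heq SG K"
  shows "self_heq SG (fcomp SC F K)"
proof -
  obtain F' K' where F: "qs_mor SG SG F" "qs_mor SG SG F'"
      "compose M (J F) (J F') = (\<lambda>a\<in>M. a)" "compose M (J F') (J F) = (\<lambda>a\<in>M. a)"
    and K: "qs_mor SG SG K" "qs_mor SG SG K'"
      "compose M (J K) (J K') = (\<lambda>a\<in>M. a)" "compose M (J K') (J K) = (\<lambda>a\<in>M. a)"
    using assms unfolding self_heq_iff by blast
  then have "compose M (J (fcomp SC F K)) (J (fcomp SC K' F')) = (\<lambda>a\<in>M. a)"
    "compose M (J (fcomp SC K' F')) (J (fcomp SC F K)) = (\<lambda>a\<in>M. a)"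
    using compose_inverse[OF underlying_mor_closed[OF F(1)] underlying_mor_closed[OF K(1)]
        underlying_mor_closed[OF K(2)] underlying_mor_closed[OF F(2)] F(3) K(3)]
      compose_inverse[OF underlying_mor_closed[OF K(2)] underlying_mor_closed[OF F(2)]
        underlying_mor_closed[OF F(1)] underlying_mor_closed[OF K(1)] K(4) F(4)]
    by (simp_all add: underlying_mor_fcomp qs_mor_fcomp)
  then show ?thesis
    unfolding self_heq_iff using qs_mor_fcomp F K by blast
qed

lemma group_haut: "group (haut SG)"
proof (rule groupI)
  fix x y assume "x \<in> carrier (haut SG)" "y \<in> carrier (haut SG)"
  then obtain F K where xy: "x = hcls SG F" "y = hcls SG K" and FK: "self_heq SG F" "self_heq SG K"
    unfolding haut_carrier by auto
  moreover have "qs_mor SG SG F" "qs_mor SG SG K" using FK unfolding self_heq_def by blast+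
  ultimately have "x \<otimes>\<^bsub>haut SG\<^esub> y = hcls SG (fcomp SC F K)" using haut_mult by simp
  then show "x \<otimes>\<^bsub>haut SG\<^esub> y \<in> carrier (haut SG)"
    using self_heq_fcomp[OF FK] unfolding haut_carrier by blast
next
  show "\<one>\<^bsub>haut SG\<^esub> \<in> carrier (haut SG)"
    using qs_aut_self_heq[OF qs_aut_fid] unfolding haut_carrier haut_one by blast
next
  fix x y z assume "x \<in> carrier (haut SG)" "y \<in> carrier (haut SG)" "z \<in> carrier (haut SG)"
  then obtain F K L where "x = hcls SG F" "y = hcls SG K" "z = hcls SG L"
    and qs: "qs_mor SG SG F" "qs_mor SG SG K" "qs_mor SG SG L"
    unfolding haut_carrier self_heq_iff by auto
  then show "x \<otimes>\<^bsub>haut SG\<^esub> y \<otimes>\<^bsub>haut SG\<^esub> z = x \<otimes>\<^bsub>haut SG\<^esub> (y \<otimes>\<^bsub>haut SG\<^esub> z)"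
    by (simp add: haut_mult qs_mor_fcomp fcomp_assoc[OF qs_mor_functor[OF qs(2)] qs_mor_functor[OF qs(3)]])
next
  fix x assume "x \<in> carrier (haut SG)"
  then obtain F where "x = hcls SG F" "qs_mor SG SG F"
    unfolding haut_carrier self_heq_iff by auto
  then show "\<one>\<^bsub>haut SG\<^esub> \<otimes>\<^bsub>haut SG\<^esub> x = x"
    using haut_mult[OF qs_mor_fid] fcomp_fid_left[OF qs_mor_functor] by (simp add: haut_one)
next
  fix x assume "x \<in> carrier (haut SG)"
  then obtain F F' where x: "x = hcls SG F" and F: "qs_mor SG SG F" "qs_mor SG SG F'"
      "compose M (J F) (J F') = (\<lambda>a\<in>M. a)" "compose M (J F') (J F) = (\<lambda>a\<in>M. a)"
    unfolding haut_carrier self_heq_iff by auto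
  then have "self_heq SG F'" unfolding self_heq_iff by blast
  then have "hcls SG F' \<in> carrier (haut SG)" unfolding haut_carrier by blast
  moreover have "hcls SG F' \<otimes>\<^bsub>haut SG\<^esub> x = hcls SG (fcomp SC F' F)"
    using haut_mult[OF F(2,1)] x by simp
  moreover have "hcls SG (fcomp SC F' F) = hcls SG (fid SC)"
    using hcls_eq_iff[OF qs_mor_fcomp[OF F(2,1)] qs_mor_fid] F(4)
    by (simp add: underlying_mor_fcomp[OF F(2,1)] underlying_mor_fid)
  ultimately show "\<exists>y\<in>carrier (haut SG). y \<otimes>\<^bsub>haut SG\<^esub> x = \<one>\<^bsub>haut SG\<^esub>"
    unfolding haut_one by metis
qed

lemma group_hAut: "group (hAut SG)"
proof (rule groupI)
  fix x y assume "x \<in> carrier (hAut SG)" "y \<in> carrier (hAut SG)"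
  then obtain F K where "x = acls SG F" "y = acls SG K" and FK: "qs_aut SG F" "qs_aut SG K"
    unfolding hAut_carrier by auto
  then have "x \<otimes>\<^bsub>hAut SG\<^esub> y = acls SG (fcomp SC F K)" using hAut_mult by simp
  then show "x \<otimes>\<^bsub>hAut SG\<^esub> y \<in> carrier (hAut SG)"
    using qs_aut_fcomp[OF FK] unfolding hAut_carrier by blast
next
  show "\<one>\<^bsub>hAut SG\<^esub> \<in> carrier (hAut SG)" unfolding hAut_carrier hAut_one using qs_aut_fid by blast
next
  fix x y z assume "x \<in> carrier (hAut SG)" "y \<in> carrier (hAut SG)" "z \<in> carrier (hAut SG)"
  then obtain F K L where "x = acls SG F" "y = acls SG K" "z = acls SG L"
    and qs: "qs_aut SG F" "qs_aut SG K" "qs_aut SG L"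
    unfolding hAut_carrier by auto
  then show "x \<otimes>\<^bsub>hAut SG\<^esub> y \<otimes>\<^bsub>hAut SG\<^esub> z = x \<otimes>\<^bsub>hAut SG\<^esub> (y \<otimes>\<^bsub>hAut SG\<^esub> z)"
    by (simp add: hAut_mult qs_aut_fcomp
        fcomp_assoc[OF qs_mor_functor[OF qs_aut_qs_mor[OF qs(2)]] qs_mor_functor[OF qs_aut_qs_mor[OF qs(3)]]])
next
  fix x assume "x \<in> carrier (hAut SG)"
  then obtain F where "x = acls SG F" "qs_aut SG F" unfolding hAut_carrier by auto
  then show "\<one>\<^bsub>hAut SG\<^esub> \<otimes>\<^bsub>hAut SG\<^esub> x = x"
    using hAut_mult[OF qs_aut_fid] fcomp_fid_left[OF qs_mor_functor[OF qs_aut_qs_mor]]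
    by (simp add: hAut_one)
next
  fix x assume "x \<in> carrier (hAut SG)"
  then obtain F where x: "x = acls SG F" and F: "qs_aut SG F" unfolding hAut_carrier by auto
  then obtain F' where F': "qs_mor SG SG F'" "fcomp SC F' F = fid SC" "fcomp SC F F' = fid SC"
    unfolding qs_aut_def by auto
  then have F'_aut: "qs_aut SG F'" unfolding qs_aut_def Stilde_simps(1) using qs_aut_qs_mor[OF F] by blast
  then have "acls SG F' \<in> carrier (hAut SG)" unfolding hAut_carrier by blast
  moreover have "acls SG F' \<otimes>\<^bsub>hAut SG\<^esub> x = \<one>\<^bsub>hAut SG\<^esub>"
    using hAut_mult[OF F'_aut F] F'(2) x by (simp add: hAut_one)
  ultimately show "\<exists>y\<in>carrier (hAut SG). y \<otimes>\<^bsub>hAut SG\<^esub> x = \<one>\<^bsub>hAut SG\<^esub>" by blast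
qed

lemma AutG_simps:
  "carrier (AutG G) = {u. is_autofunctor G u}" "x \<otimes>\<^bsub>AutG G\<^esub> y = fcomp G x y"
  by (simp_all add: AutG_def)

lemma eta_S2:
  assumes "u \<in> carrier (AutG G)"
  shows "eta SG (S2 G u) = S1 G u"
proof -
  have u: "qs_aut SG (Stilde_fun G u)" using qs_aut_Stilde_fun assms by (simp add: AutG_simps)
  show ?thesis
    using some_acls[OF u] qs_aut_qs_mor u
    unfolding eta_def S2_def S1_def by (simp add: hcls_eq_iff)
qed

lemma S1_hom: "S1 G \<in> hom (AutG G) (haut SG)"
proof (rule homI)
  fix u assume "u \<in> carrier (AutG G)"
  then have "self_heq SG (Stilde_fun G u)"
    using qs_aut_self_heq qs_aut_Stilde_fun by (simp add: AutG_simps)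
  then show "S1 G u \<in> carrier (haut SG)" unfolding S1_def haut_carrier by blast
next
  fix u v assume "u \<in> carrier (AutG G)" "v \<in> carrier (AutG G)"
  then show "S1 G (u \<otimes>\<^bsub>AutG G\<^esub> v) = S1 G u \<otimes>\<^bsub>haut SG\<^esub> S1 G v"
    unfolding S1_def AutG_simps is_autofunctor_def
    by (simp add: haut_mult qs_mor_Stilde_fun Stilde_fun_fcomp)
qed

lemma S2_hom: "S2 G \<in> hom (AutG G) (hAut SG)"
proof (rule homI)
  fix u assume "u \<in> carrier (AutG G)"
  then show "S2 G u \<in> carrier (hAut SG)"
    using qs_aut_Stilde_fun unfolding S2_def hAut_carrier AutG_simps by blast
next
  fix u v assume "u \<in> carrier (AutG G)" "v \<in> carrier (AutG G)"
  then show "S2 G (u \<otimes>\<^bsub>AutG G\<^esub> v) = S2 G u \<otimes>\<^bsub>hAut SG\<^esub> S2 G v"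
    using qs_aut_Stilde_fun unfolding S2_def AutG_simps
    by (simp add: hAut_mult Stilde_fun_fcomp is_autofunctor_def)
qed

lemma underlying_mor_inj_on_AutG:
  assumes "u \<in> carrier (AutG G)" "v \<in> carrier (AutG G)"
    and "J (Stilde_fun G u) = J (Stilde_fun G v)"
  shows "u = v"
  using assms functor_eqI underlying_mor_Stilde_fun
  unfolding AutG_simps is_autofunctor_def by auto

lemma inj_on_S1: "inj_on (S1 G) (carrier (AutG G))"
  by (rule inj_onI, rule underlying_mor_inj_on_AutG)
    (use qs_aut_Stilde_fun qs_aut_qs_mor in \<open>auto simp: S1_def AutG_simps hcls_eq_iff\<close>)

lemma inj_on_S2: "inj_on (S2 G) (carrier (AutG G))"
  by (rule inj_onI, rule underlying_mor_inj_on_AutG)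
    (use qs_aut_Stilde_fun in \<open>auto simp: S2_def AutG_simps acls_eq_iff\<close>)

lemma S2_image: "S2 G ` carrier (AutG G) = carrier (hAut SG)"
proof
  show "S2 G ` carrier (AutG G) \<subseteq> carrier (hAut SG)" using S2_hom hom_carrier by blast
  show "carrier (hAut SG) \<subseteq> S2 G ` carrier (AutG G)"
  proof
    fix X assume "X \<in> carrier (hAut SG)"
    then obtain F where X: "X = acls SG F" and F: "qs_aut SG F" unfolding hAut_carrier by blast
    let ?u = "underlying_functor G F"
    have u: "?u \<in> carrier (AutG G)"
      using is_autofunctor_underlying_functor[OF F] by (simp add: AutG_simps)
    have "S2 G ?u = X"
      unfolding S2_def X
      using acls_eq_iff[OF qs_aut_Stilde_fun F] is_autofunctor_underlying_functor[OF F]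
        underlying_mor_Stilde_fun_underlying_functor[OF qs_aut_qs_mor[OF F]] by simp
    then show "X \<in> S2 G ` carrier (AutG G)" using u by blast
  qed
qed

end

theorem theorem4p7:
  fixes G :: "('o, 'm) cat"
  assumes "is_groupoid G"
  shows "(\<forall>u \<in> carrier (AutG G). eta (Stilde G) (S2 G u) = S1 G u)
      \<and> group_hom (AutG G) (haut (Stilde G)) (S1 G)
      \<and> inj_on (S1 G) (carrier (AutG G))
      \<and> (finite (cobj G) \<and> finite (cmor G) \<longrightarrow>
           group_hom (AutG G) (hAut (Stilde G)) (S2 G)
           \<and> S2 G \<in> iso (AutG G) (hAut (Stilde G)))"
proof -
  interpret groupoid G by (rule groupoid.intro) (rule assms)
  have "group_hom (AutG G) (haut SG) (S1 G)" "group_hom (AutG G) (hAut SG) (S2 G)"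
    unfolding group_hom_def group_hom_axioms_def
    using group_AutG[OF is_cat] group_haut group_hAut S1_hom S2_hom by blast+
  moreover have "S2 G \<in> iso (AutG G) (hAut SG)"
    unfolding iso_def bij_betw_def using S2_hom inj_on_S2 S2_image by blast
  ultimately show ?thesis using eta_S2 inj_on_S1 by blast
qed

end
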